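(* Let $\mathcal{A}$ be an $\alpha$-approximation algorithm ($\alpha\ge 1$) for the single-machine non-preemptive scheduling problem with release times and delivery times (problem $1|r_j|L_{\max}$ in the delivery-time model). Let $G$ be the dependency graph produced by the following procedure: for each semaphore $s_k$, let $\mathbf{T}_k=\{\tau_i:\sigma_i=s_k\}$; for each $\tau_i\in\mathbf{T}_k$ create a job $J_i$ with release time $r_i=C_{i,1}$, processing time $p_i=A_{i,1}$ and delivery time $q_i=C_{i,2}$; apply $\mathcal{A}$ to these jobs to obtain a non-preemptive single-machine schedule $\rho_k$; let $\pi_k$ be the order in which $\rho_k$ executes the jobs, and include the edge $(A_{i,1},A_{j,1})$ whenever $J_j$ is executed immediately after $J_i$ (not necessarily contiguously in time) in $\rho_k$; together with the edges $(C_{i,1},A_{i,1}),(A_{i,1},C_{i,2})$ for all tasks, this defines $G$. Then $len(G)\le \alpha\cdot len(G^* )$.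
   Context: Task model: a set $\mathbf{T}$ of $N$ tasks. Each task $\tau_i$ releases exactly one job at time $0$, consisting of three subjobs executed sequentially in this order: a first non-critical section of execution time $C_{i,1}\ge 0$, a critical section of execution time $A_{i,1}\ge 0$ guarded by a binary semaphore $\sigma_i\in\{s_1,\dots,s_z\}$ (each task uses exactly one semaphore), and a second non-critical section of execution time $C_{i,2}\ge 0$. Dependency graph: a dependency graph $G$ of $\mathbf{T}$ is a directed graph whose vertices are the $3N$ subjobs $C_{i,1},A_{i,1},C_{i,2}$, weighted by their execution times, containing the edges $(C_{i,1},A_{i,1})$ and $(A_{i,1},C_{i,2})$ for every $i$, and, for each semaphore $s_k$, a total order $\pi_k$ on $\mathbf{T}_k$ together with the edges $(A_{i,1},A_{j,1})$ whenever $\pi_k(\tau_i)=\pi_k(\tau_j)-1$ (no other edges). The length of a path is the sum of the weights of its vertices; $len(G)$ is the maximum length of a path in $G$. $G^*$ denotes a dependency graph minimizing $len(G)$. Delivery-time model of $1|r_j|L_{\max}$: a single machine processes jobs $J_j$ with release time $r_j\ge0$, processing time $p_j\ge 0$ and delivery time $q_j\ge 0$ non-preemptively, no job starting before its release time; if $J_j$ completes at time $c_j$, its result is delivered at $c_j+q_j$; the objective is to minimize $\max_j (c_j+q_j)$. An $\alpha$-approximation algorithm always returns a schedule whose objective is at most $\alpha$ times the optimum. *)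

theory Defs
  imports Complex_Main
begin

text \<open>A non-preemptive single-machine schedule
is given by the execution order (a list enumerating J) together with start
times s; consecutive jobs in the order do not overlap and no job starts before
its release time.\<close>

type_synonym schedule = "nat list \<times> (nat \<Rightarrow> real)"

definition feasible_schedule ::
  "nat set \<Rightarrow> (nat \<Rightarrow> real) \<Rightarrow> (nat \<Rightarrow> real) \<Rightarrow> schedule \<Rightarrow> bool" where
  "feasible_schedule J r p sch \<longleftrightarrow>
     (let ord = fst sch; s = snd sch in
        distinct ord \<and> set ord = J \<and>
        (\<forall>j\<in>J. r j \<le> s j) \<and>
        (\<forall>n. Suc n < length ord \<longrightarrow> s (ord ! n) + p (ord ! n) \<le> s (ord ! Suc n)))"

definition lmax_obj ::
  "nat set \<Rightarrow> (nat \<Rightarrow> real) \<Rightarrow> (nat \<Rightarrow> real) \<Rightarrow> schedule \<Rightarrow> real" where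
  "lmax_obj J p q sch = Max (insert 0 ((\<lambda>j. snd sch j + p j + q j) ` J))"

definition lmax_opt ::
  "nat set \<Rightarrow> (nat \<Rightarrow> real) \<Rightarrow> (nat \<Rightarrow> real) \<Rightarrow> (nat \<Rightarrow> real) \<Rightarrow> real" where
  "lmax_opt J r p q = Inf {lmax_obj J p q sch | sch. feasible_schedule J r p sch}"

definition approx_alg ::
  "real \<Rightarrow> (nat set \<Rightarrow> (nat \<Rightarrow> real) \<Rightarrow> (nat \<Rightarrow> real) \<Rightarrow> (nat \<Rightarrow> real) \<Rightarrow> schedule) \<Rightarrow> bool" where
  "approx_alg \<alpha> Alg \<longleftrightarrow>
     (\<forall>J r p q. finite J \<and> (\<forall>j\<in>J. 0 \<le> r j \<and> 0 \<le> p j \<and> 0 \<le> q j) \<longrightarrow>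
        feasible_schedule J r p (Alg J r p q) \<and>
        lmax_obj J p q (Alg J r p q) \<le> \<alpha> * lmax_opt J r p q)"

datatype subjob = SC1 nat | SA nat | SC2 nat

definition task_set :: "nat \<Rightarrow> (nat \<Rightarrow> nat) \<Rightarrow> nat \<Rightarrow> nat set" where
  "task_set N sem k = {i. i < N \<and> sem i = k}"

definition valid_orders :: "nat \<Rightarrow> (nat \<Rightarrow> nat) \<Rightarrow> (nat \<Rightarrow> nat list) \<Rightarrow> bool" where
  "valid_orders N sem \<pi> \<longleftrightarrow> (\<forall>k. distinct (\<pi> k) \<and> set (\<pi> k) = task_set N sem k)"

definition subjobs :: "nat \<Rightarrow> subjob set" where
  "subjobs N = SC1 ` {..<N} \<union> SA ` {..<N} \<union> SC2 ` {..<N}"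

definition weight :: "(nat \<Rightarrow> real) \<Rightarrow> (nat \<Rightarrow> real) \<Rightarrow> (nat \<Rightarrow> real) \<Rightarrow> subjob \<Rightarrow> real" where
  "weight C1 A C2 v = (case v of SC1 i \<Rightarrow> C1 i | SA i \<Rightarrow> A i | SC2 i \<Rightarrow> C2 i)"

definition dep_edge :: "nat \<Rightarrow> (nat \<Rightarrow> nat list) \<Rightarrow> subjob \<Rightarrow> subjob \<Rightarrow> bool" where
  "dep_edge N \<pi> u v \<longleftrightarrow>
     (\<exists>i<N. u = SC1 i \<and> v = SA i) \<or>
     (\<exists>i<N. u = SA i \<and> v = SC2 i) \<or>
     (\<exists>k i j. u = SA i \<and> v = SA j \<and>
        (\<exists>n. Suc n < length (\<pi> k) \<and> \<pi> k ! n = i \<and> \<pi> k ! Suc n = j))"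

definition is_path :: "nat \<Rightarrow> (nat \<Rightarrow> nat list) \<Rightarrow> subjob list \<Rightarrow> bool" where
  "is_path N \<pi> ps \<longleftrightarrow> ps \<noteq> [] \<and> distinct ps \<and> set ps \<subseteq> subjobs N \<and>
     (\<forall>n. Suc n < length ps \<longrightarrow> dep_edge N \<pi> (ps ! n) (ps ! Suc n))"

definition path_len :: "(nat \<Rightarrow> real) \<Rightarrow> (nat \<Rightarrow> real) \<Rightarrow> (nat \<Rightarrow> real) \<Rightarrow> subjob list \<Rightarrow> real" where
  "path_len C1 A C2 ps = sum_list (map (weight C1 A C2) ps)"

definition graph_len ::
  "nat \<Rightarrow> (nat \<Rightarrow> real) \<Rightarrow> (nat \<Rightarrow> real) \<Rightarrow> (nat \<Rightarrow> real) \<Rightarrow> (nat \<Rightarrow> nat list) \<Rightarrow> real" where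
  "graph_len N C1 A C2 \<pi> = Max (insert 0 {path_len C1 A C2 ps | ps. is_path N \<pi> ps})"

definition alg_orders ::
  "(nat set \<Rightarrow> (nat \<Rightarrow> real) \<Rightarrow> (nat \<Rightarrow> real) \<Rightarrow> (nat \<Rightarrow> real) \<Rightarrow> schedule) \<Rightarrow>
   nat \<Rightarrow> (nat \<Rightarrow> nat) \<Rightarrow> (nat \<Rightarrow> real) \<Rightarrow> (nat \<Rightarrow> real) \<Rightarrow> (nat \<Rightarrow> real) \<Rightarrow> nat \<Rightarrow> nat list" where
  "alg_orders Alg N sem C1 A C2 k = fst (Alg (task_set N sem k) C1 A C2)"

end

theory Submission
  imports Defs
begin

text \<open>Both bounds go through schedules. A start time assignment that respects release
  times and the chosen orders bounds every path of the dependency graph by the largest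
  delivery time, so the graph built from the algorithm's schedules has length at most
  \<open>\<alpha>\<close> times the per-semaphore optimum. Conversely, for any orders \<open>\<pi>\<close>, the
  as-soon-as-possible schedule following \<open>\<pi>\<^sub>k\<close> is feasible, and each of its delivery
  times is the length of a critical path of the graph built from \<open>\<pi>\<close>; hence the
  optimum is at most \<open>len(G)\<close>.\<close>

lemma sum_list_le_potential:
  fixes w b :: "'a \<Rightarrow> real"
  assumes "xs \<noteq> []" "set xs \<subseteq> S"
    and "\<forall>v\<in>S. w v \<le> b v"
    and "\<forall>u\<in>S. \<forall>v\<in>S. E u v \<longrightarrow> b u + w v \<le> b v"
    and "\<forall>n. Suc n < length xs \<longrightarrow> E (xs ! n) (xs ! Suc n)"
  shows "sum_list (map w xs) \<le> b (last xs)"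
  using assms
proof (induction xs rule: rev_induct)
  case Nil
  then show ?case by simp
next
  case (snoc x xs)
  show ?case
  proof (cases "xs = []")
    case True
    then show ?thesis using snoc.prems by simp
  next
    case False
    have "\<forall>n. Suc n < length xs \<longrightarrow> E (xs ! n) (xs ! Suc n)"
    proof (intro allI impI)
      fix n assume "Suc n < length xs"
      then show "E (xs ! n) (xs ! Suc n)"
        using snoc.prems(5)[rule_format, of n] by (simp add: nth_append)
    qed
    then have "sum_list (map w xs) \<le> b (last xs)"
      using snoc.IH False snoc.prems(2-4) by simp
    moreover have "E (last xs) x"
      using snoc.prems(5)[rule_format, of "length xs - 1"] False
      by (simp add: nth_append last_conv_nth)
    moreover have "last xs \<in> S" "x \<in> S"
      using snoc.prems(2) False by auto
    ultimately show ?thesis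
      using snoc.prems(4) by fastforce
  qed
qed

lemma finite_subjobs: "finite (subjobs N)"
  by (simp add: subjobs_def)

lemma finite_paths: "finite {ps. is_path N \<pi> ps}"
proof (rule finite_subset)
  show "{ps. is_path N \<pi> ps} \<subseteq> {xs. set xs \<subseteq> subjobs N \<and> length xs \<le> card (subjobs N)}"
  proof clarify
    fix ps assume "is_path N \<pi> ps"
    then have "distinct ps" "set ps \<subseteq> subjobs N" by (auto simp: is_path_def)
    then show "set ps \<subseteq> subjobs N \<and> length ps \<le> card (subjobs N)"
      using card_mono[OF finite_subjobs] distinct_card by metis
  qed
  show "finite {xs. set xs \<subseteq> subjobs N \<and> length xs \<le> card (subjobs N)}"
    by (rule finite_lists_length_le[OF finite_subjobs])
qed

lemma finite_path_lens: "finite (insert 0 {path_len C1 A C2 ps | ps. is_path N \<pi> ps})"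
  using finite_paths by simp

lemma path_len_le_graph_len:
  "is_path N \<pi> ps \<Longrightarrow> path_len C1 A C2 ps \<le> graph_len N C1 A C2 \<pi>"
  unfolding graph_len_def by (rule Max_ge[OF finite_path_lens]) blast

lemma graph_len_nonneg: "0 \<le> graph_len N C1 A C2 \<pi>"
  unfolding graph_len_def by (rule Max_ge[OF finite_path_lens]) blast

lemma graph_len_le:
  assumes "\<And>ps. is_path N \<pi> ps \<Longrightarrow> path_len C1 A C2 ps \<le> X" and "0 \<le> X"
  shows "graph_len N C1 A C2 \<pi> \<le> X"
  unfolding graph_len_def using assms by (subst Max_le_iff[OF finite_path_lens]) auto

lemma is_path_snoc:
  assumes "is_path N \<pi> xs" "x \<notin> set xs" "x \<in> subjobs N" "dep_edge N \<pi> (last xs) x"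
  shows "is_path N \<pi> (xs @ [x])"
proof -
  have "xs \<noteq> []" using assms(1) by (simp add: is_path_def)
  then have "(xs @ [x]) ! n = last xs" if "Suc n = length xs" for n
  proof -
    have "n = length xs - 1" using that by simp
    then show ?thesis using \<open>xs \<noteq> []\<close> by (simp add: nth_append last_conv_nth)
  qed
  then show ?thesis
    using assms by (auto simp: is_path_def nth_append less_Suc_eq)
qed

lemma is_path_C1_A: "i < N \<Longrightarrow> is_path N \<pi> [SC1 i, SA i]"
  using is_path_snoc[of N \<pi> "[SC1 i]" "SA i"]
  by (simp add: is_path_def subjobs_def dep_edge_def)

lemma graph_len_le_by_start_times:
  fixes s :: "nat \<Rightarrow> real"
  assumes nonneg: "\<forall>i<N. 0 \<le> C1 i \<and> 0 \<le> A i \<and> 0 \<le> C2 i"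
    and release: "\<forall>i<N. C1 i \<le> s i"
    and order: "\<forall>k n. Suc n < length (\<pi> k) \<longrightarrow> s (\<pi> k ! n) + A (\<pi> k ! n) \<le> s (\<pi> k ! Suc n)"
    and delivery: "\<forall>i<N. s i + A i + C2 i \<le> X"
    and "0 \<le> X"
  shows "graph_len N C1 A C2 \<pi> \<le> X"
proof (rule graph_len_le)
  \<comment> \<open>finishing times under \<open>s\<close>: along every edge they grow by at least the weight of the target\<close>
  define b where "b v = (case v of SC1 i \<Rightarrow> C1 i | SA i \<Rightarrow> s i + A i | SC2 i \<Rightarrow> s i + A i + C2 i)"
    for v
  fix ps assume ps: "is_path N \<pi> ps"
  have "path_len C1 A C2 ps \<le> b (last ps)"
    unfolding path_len_def
  proof (rule sum_list_le_potential[where S = "subjobs N" and E = "dep_edge N \<pi>"])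
    show "ps \<noteq> []" "set ps \<subseteq> subjobs N"
      "\<forall>n. Suc n < length ps \<longrightarrow> dep_edge N \<pi> (ps ! n) (ps ! Suc n)"
      using ps by (auto simp: is_path_def)
    show "\<forall>v\<in>subjobs N. weight C1 A C2 v \<le> b v"
      using nonneg release by (fastforce simp: subjobs_def weight_def b_def)
    show "\<forall>u\<in>subjobs N. \<forall>v\<in>subjobs N. dep_edge N \<pi> u v \<longrightarrow> b u + weight C1 A C2 v \<le> b v"
      using release order by (auto simp: dep_edge_def b_def weight_def)
  qed
  also have "b (last ps) \<le> X"
  proof -
    have "last ps \<in> subjobs N" using ps by (auto simp: is_path_def)
    then show ?thesis
      using nonneg release delivery by (fastforce simp: subjobs_def b_def)
  qed
  finally show "path_len C1 A C2 ps \<le> X" .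
qed fact

lemma finite_task_set: "finite (task_set N sem k)"
  by (rule finite_subset[of _ "{..<N}"]) (auto simp: task_set_def)

lemma lmax_obj_ge:
  "finite J \<Longrightarrow> j \<in> J \<Longrightarrow> snd sch j + p j + q j \<le> lmax_obj J p q sch"
  unfolding lmax_obj_def by (rule Max_ge) auto

lemma lmax_obj_le:
  assumes "finite J" "\<And>j. j \<in> J \<Longrightarrow> snd sch j + p j + q j \<le> X" "0 \<le> X"
  shows "lmax_obj J p q sch \<le> X"
  unfolding lmax_obj_def using assms by (subst Max_le_iff) auto

lemma lmax_opt_le_obj:
  assumes "finite J" "feasible_schedule J r p sch"
  shows "lmax_opt J r p q \<le> lmax_obj J p q sch"
  unfolding lmax_opt_def
proof (rule cInf_lower)
  show "lmax_obj J p q sch \<in> {lmax_obj J p q sch | sch. feasible_schedule J r p sch}"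
    using assms(2) by blast
  have "0 \<le> lmax_obj J p q sch'" for sch'
    unfolding lmax_obj_def using assms(1) by (intro Max_ge) auto
  then show "bdd_below {lmax_obj J p q sch | sch. feasible_schedule J r p sch}"
    by (auto intro: bdd_belowI[of _ 0])
qed

fun asap_start :: "nat list \<Rightarrow> (nat \<Rightarrow> real) \<Rightarrow> (nat \<Rightarrow> real) \<Rightarrow> nat \<Rightarrow> real" where
  "asap_start ord r p 0 = r (ord ! 0)"
| "asap_start ord r p (Suc n) = max (r (ord ! Suc n)) (asap_start ord r p n + p (ord ! n))"

definition asap_schedule :: "nat list \<Rightarrow> (nat \<Rightarrow> real) \<Rightarrow> (nat \<Rightarrow> real) \<Rightarrow> schedule" where
  "asap_schedule ord r p = (ord, \<lambda>j. asap_start ord r p (the_inv_into {..<length ord} ((!) ord) j))"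

lemma release_le_asap_start: "r (ord ! n) \<le> asap_start ord r p n"
  by (cases n) auto

lemma asap_schedule_start:
  assumes "distinct ord" "n < length ord"
  shows "snd (asap_schedule ord r p) (ord ! n) = asap_start ord r p n"
  using assms by (simp add: asap_schedule_def the_inv_into_f_f inj_on_nth)

lemma feasible_asap_schedule:
  assumes "distinct ord"
  shows "feasible_schedule (set ord) r p (asap_schedule ord r p)"
proof -
  have "r j \<le> snd (asap_schedule ord r p) j" if "j \<in> set ord" for j
    using that assms by (auto simp: in_set_conv_nth asap_schedule_start release_le_asap_start)
  moreover have "fst (asap_schedule ord r p) = ord"
    by (simp add: asap_schedule_def)
  ultimately show ?thesis
    using assms by (auto simp: feasible_schedule_def Let_def asap_schedule_start)
qed

text \<open>The last conjunct is what keeps the extended paths simple (\<open>is_path\<close> demands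
  distinct vertices).\<close>
lemma path_to_asap_completion:
  assumes "valid_orders N sem \<pi>" "n < length (\<pi> k)"
  shows "\<exists>ps. is_path N \<pi> ps \<and> last ps = SA (\<pi> k ! n) \<and>
    path_len C1 A C2 ps = asap_start (\<pi> k) C1 A n + A (\<pi> k ! n) \<and>
    set ps \<subseteq> range SC1 \<union> SA ` set (take (Suc n) (\<pi> k))"
proof -
  have in_N: "\<pi> k ! m < N" if "m < length (\<pi> k)" for m
    using assms(1) that nth_mem by (fastforce simp: valid_orders_def task_set_def)
  show ?thesis
    using assms(2)
  proof (induction n)
    case 0
    then show ?case
      using in_N is_path_C1_A
      by (intro exI[of _ "[SC1 (\<pi> k ! 0), SA (\<pi> k ! 0)]"])
        (auto simp: path_len_def weight_def take_Suc_conv_app_nth)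
  next
    case (Suc n)
    then obtain ps where ps: "is_path N \<pi> ps" "last ps = SA (\<pi> k ! n)"
        "path_len C1 A C2 ps = asap_start (\<pi> k) C1 A n + A (\<pi> k ! n)"
        "set ps \<subseteq> range SC1 \<union> SA ` set (take (Suc n) (\<pi> k))"
      by auto
    let ?j = "\<pi> k ! Suc n"
    show ?case
    proof (cases "asap_start (\<pi> k) C1 A n + A (\<pi> k ! n) \<le> C1 ?j")
      case True
      then show ?thesis
        using in_N is_path_C1_A Suc.prems
        by (intro exI[of _ "[SC1 ?j, SA ?j]"])
          (auto simp: path_len_def weight_def take_Suc_conv_app_nth)
    next
      case False
      have "?j \<notin> set (take (Suc n) (\<pi> k))"
        using assms(1) Suc.prems
        by (auto simp: valid_orders_def in_set_conv_nth nth_eq_iff_index_eq)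
      then have "SA ?j \<notin> set ps" using ps(4) by auto
      moreover have "dep_edge N \<pi> (last ps) (SA ?j)"
        unfolding dep_edge_def using ps(2) Suc.prems by blast
      ultimately have "is_path N \<pi> (ps @ [SA ?j])"
        using is_path_snoc[OF ps(1)] in_N Suc.prems by (simp add: subjobs_def)
      then show ?thesis
        using ps(3,4) False Suc.prems
        by (intro exI[of _ "ps @ [SA ?j]"])
          (auto simp: path_len_def weight_def take_Suc_conv_app_nth)
    qed
  qed
qed

lemma lmax_opt_le_graph_len:
  assumes "valid_orders N sem \<pi>"
  shows "lmax_opt (task_set N sem k) C1 A C2 \<le> graph_len N C1 A C2 \<pi>"
proof -
  let ?J = "task_set N sem k"
  have ord: "distinct (\<pi> k)" "set (\<pi> k) = ?J"
    using assms by (auto simp: valid_orders_def)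
  have "lmax_opt ?J C1 A C2 \<le> lmax_obj ?J A C2 (asap_schedule (\<pi> k) C1 A)"
    using finite_task_set feasible_asap_schedule[OF ord(1)] ord(2) by (metis lmax_opt_le_obj)
  also have "\<dots> \<le> graph_len N C1 A C2 \<pi>"
  proof (rule lmax_obj_le[OF finite_task_set _ graph_len_nonneg])
    fix j assume "j \<in> ?J"
    then obtain n where n: "n < length (\<pi> k)" "j = \<pi> k ! n"
      using ord(2) by (metis in_set_conv_nth)
    then obtain ps where ps: "is_path N \<pi> ps" "last ps = SA j"
        "path_len C1 A C2 ps = asap_start (\<pi> k) C1 A n + A j"
        "set ps \<subseteq> range SC1 \<union> SA ` set (take (Suc n) (\<pi> k))"
      using path_to_asap_completion[OF assms] by blast
    have "j < N" using \<open>j \<in> ?J\<close> by (simp add: task_set_def)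
    then have "is_path N \<pi> (ps @ [SC2 j])"
      using ps by (auto intro!: is_path_snoc simp: subjobs_def dep_edge_def)
    moreover have "path_len C1 A C2 (ps @ [SC2 j]) = snd (asap_schedule (\<pi> k) C1 A) j + A j + C2 j"
      using ps(3) n ord(1) by (simp add: path_len_def weight_def asap_schedule_start)
    ultimately show "snd (asap_schedule (\<pi> k) C1 A) j + A j + C2 j \<le> graph_len N C1 A C2 \<pi>"
      by (metis path_len_le_graph_len)
  qed
  finally show ?thesis .
qed

lemma start_times_of_feasible_schedules:
  assumes "\<forall>k. feasible_schedule (task_set N sem k) r p (sch k)"
  shows "\<forall>i<N. r i \<le> snd (sch (sem i)) i"
    and "\<forall>k n. Suc n < length (fst (sch k)) \<longrightarrow>
      snd (sch (sem (fst (sch k) ! n))) (fst (sch k) ! n) + p (fst (sch k) ! n)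
        \<le> snd (sch (sem (fst (sch k) ! Suc n))) (fst (sch k) ! Suc n)"
proof -
  show "\<forall>i<N. r i \<le> snd (sch (sem i)) i"
    using assms by (auto simp: feasible_schedule_def Let_def task_set_def)
  have "sem (fst (sch k) ! m) = k" if "m < length (fst (sch k))" for k m
    using assms that nth_mem by (fastforce simp: feasible_schedule_def Let_def task_set_def)
  then show "\<forall>k n. Suc n < length (fst (sch k)) \<longrightarrow>
      snd (sch (sem (fst (sch k) ! n))) (fst (sch k) ! n) + p (fst (sch k) ! n)
        \<le> snd (sch (sem (fst (sch k) ! Suc n))) (fst (sch k) ! Suc n)"
    using assms by (simp add: feasible_schedule_def Let_def Suc_lessD)
qed

theorem mainTheorem7:
  fixes N :: nat and sem :: "nat \<Rightarrow> nat" and C1 A C2 :: "nat \<Rightarrow> real"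
    and \<alpha> :: real
    and Alg :: "nat set \<Rightarrow> (nat \<Rightarrow> real) \<Rightarrow> (nat \<Rightarrow> real) \<Rightarrow> (nat \<Rightarrow> real) \<Rightarrow> schedule"
  assumes "1 \<le> \<alpha>"
    and "approx_alg \<alpha> Alg"
    and "\<forall>i<N. 0 \<le> C1 i \<and> 0 \<le> A i \<and> 0 \<le> C2 i"
  shows "\<forall>\<pi>. valid_orders N sem \<pi> \<longrightarrow>
           graph_len N C1 A C2 (alg_orders Alg N sem C1 A C2) \<le> \<alpha> * graph_len N C1 A C2 \<pi>"
proof (intro allI impI)
  fix \<pi> assume \<pi>: "valid_orders N sem \<pi>"
  define sch where "sch k = Alg (task_set N sem k) C1 A C2" for k
  have alg: "feasible_schedule (task_set N sem k) C1 A (sch k)"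
      "lmax_obj (task_set N sem k) A C2 (sch k) \<le> \<alpha> * lmax_opt (task_set N sem k) C1 A C2" for k
    using assms(2,3) finite_task_set unfolding approx_alg_def sch_def by (auto simp: task_set_def)
  have delivery: "snd (sch (sem i)) i + A i + C2 i \<le> \<alpha> * graph_len N C1 A C2 \<pi>" if "i < N" for i
  proof -
    have "snd (sch (sem i)) i + A i + C2 i \<le> lmax_obj (task_set N sem (sem i)) A C2 (sch (sem i))"
      using that by (intro lmax_obj_ge finite_task_set) (simp add: task_set_def)
    also have "\<dots> \<le> \<alpha> * lmax_opt (task_set N sem (sem i)) C1 A C2"
      by (rule alg(2))
    also have "\<dots> \<le> \<alpha> * graph_len N C1 A C2 \<pi>"
      using lmax_opt_le_graph_len[OF \<pi>] assms(1) by (simp add: mult_left_mono)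
    finally show ?thesis .
  qed
  show "graph_len N C1 A C2 (alg_orders Alg N sem C1 A C2) \<le> \<alpha> * graph_len N C1 A C2 \<pi>"
    using start_times_of_feasible_schedules[of N sem C1 A sch] alg(1) delivery assms(1,3)
      graph_len_nonneg[of N C1 A C2 \<pi>]
    by (intro graph_len_le_by_start_times) (auto simp: alg_orders_def sch_def)
qed

end
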